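(* Let $m\ge3$ be an integer and let $n$ be a positive divisor of $\frac{3^m-1}{2}$ with $n>\frac{3^{\lfloor m/2\rfloor}+1}{2}$. Let $\beta$ be a primitive $2n$-th root of unity in an extension field of $\mathrm{GF}(3)$, and for $i$ let $\mathbb{M}_{\beta^i}(x)$ be the minimal polynomial of $\beta^i$ over $\mathrm{GF}(3)$. Then $\mathrm{ord}_{2n}(3)=m$ and $\mathrm{lcm}(\mathbb{M}_\beta(x),\mathbb{M}_{\beta^{2n-1}}(x))=\mathbb{M}_\beta(x)\mathbb{M}_{\beta^{2n-1}}(x)$.
   Context: $\mathrm{ord}_M(3)$ is the multiplicative order of $3$ modulo $M$; lcm is the least common multiple of polynomials. *)

theory Defs
  imports "Berlekamp_Zassenhaus.Finite_Field"
    "HOL-Computational_Algebra.Polynomial_Factorial"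
    "HOL-Number_Theory.Number_Theory"
begin

text \<open>A three-element type, so that \<open>three mod_ring\<close> is the field GF(3).\<close>
typedef three = "{0::nat, 1, 2}" by auto

lemma card_three: "CARD(three) = 3"
  using type_definition.card[OF type_definition_three] by simp

instance three :: finite
proof
  show "finite (UNIV :: three set)"
    using card_three card.infinite by fastforce
qed

instance three :: prime_card
  by standard (simp add: card_three)

type_synonym gf3 = "three mod_ring"

definition gf3_emb :: "gf3 \<Rightarrow> 'a::field" where
  "gf3_emb x = of_int (to_int_mod_ring x)"

definition min_poly_gf3 :: "'a::field \<Rightarrow> gf3 poly" where
  "min_poly_gf3 \<alpha> = (THE p. lead_coeff p = 1 \<and> poly (map_poly gf3_emb p) \<alpha> = 0 \<and>
      (\<forall>q. q \<noteq> 0 \<and> poly (map_poly gf3_emb q) \<alpha> = 0 \<longrightarrow> degree p \<le> degree q))"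

definition primitive_root_unity :: "nat \<Rightarrow> 'a::field \<Rightarrow> bool" where
  "primitive_root_unity N b \<longleftrightarrow> b ^ N = 1 \<and> (\<forall>k. 0 < k \<and> k < N \<longrightarrow> b ^ k \<noteq> 1)"

end

theory Submission
  imports Defs
begin

(* Since 2n divides 3^m - 1 but exceeds 3^(m div 2) + 1, no proper divisor d of m has
  2n dividing 3^d - 1, and 2n divides no 3^j + 1 with j < m (that would force m to divide 2j).
  As \<beta>^(3^m) = \<beta>, the product of the x - \<beta>^(3^j), j < m, is fixed by the Frobenius map,
  so it has coefficients in GF(3) and is divisible by the minimal polynomial of \<beta>. If
  \<beta>^(-1) = \<beta>^(2n-1) were a root of it, 2n would divide some 3^j + 1. Hence the irreducible
  minimal polynomial of \<beta>^(-1) does not divide that of \<beta>: the two are coprime and monic,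
  and their lcm is their product. *)

lemma ord_eq_if_power_cong_one:
  fixes a N m :: nat
  assumes "a > 1" "m > 0" "[a ^ m = 1] (mod N)" "a ^ (m div 2) + 1 < N"
  shows "ord N a = m"
proof (rule ccontr)
  define d where "d = ord N a"
  assume "ord N a \<noteq> m"
  then have "d \<noteq> m"
    unfolding d_def .
  have "coprime a N"
    using assms(2,3) lucas_coprime_lemma by blast
  then have "d > 0"
    unfolding d_def by (simp add: ord_eq_0 coprime_commute)
  obtain k where k: "m = d * k"
    using assms(3) ord_divides unfolding d_def by blast
  with \<open>d \<noteq> m\<close> assms(2) have "k \<ge> 2"
    by (cases "k = 0 \<or> k = 1") auto
  then have "d \<le> m div 2"
    using k by (metis div_le_mono mult_le_mono2 nonzero_mult_div_cancel_right zero_neq_numeral)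
  then have "a ^ d \<le> a ^ (m div 2)"
    using assms(1) by simp
  moreover have "N \<le> a ^ d - 1"
  proof (rule dvd_imp_le)
    show "N dvd a ^ d - 1"
      unfolding d_def using ord[of a N] assms(1) by (simp add: cong_altdef_nat)
    show "a ^ d - 1 > 0"
      using one_less_power[OF assms(1) \<open>d > 0\<close>] by simp
  qed
  ultimately show False
    using assms(4) by linarith
qed

lemma not_dvd_power_plus_one_if_ord:
  fixes a N m j :: nat
  assumes "a > 1" "ord N a = m" "a ^ (m div 2) + 1 < N" "j < m"
  shows "\<not> N dvd a ^ j + 1"
proof
  assume "N dvd a ^ j + 1"
  then have "N dvd (a ^ j + 1) * (a ^ j - 1)"
    by (rule dvd_mult2)
  also have "(a ^ j + 1) * (a ^ j - 1) = a ^ (2 * j) - 1"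
    by (simp add: power_mult power2_eq_square algebra_simps)
  finally have "m dvd 2 * j"
    using assms(1,2) ord_divides[of a "2 * j" N] by (simp add: cong_altdef_nat)
  then obtain k where k: "2 * j = m * k" ..
  with assms(4) have "m * k < m * 2"
    by linarith
  then have "k < 2"
    by simp
  with k have "2 * j \<le> m"
    by (cases "k = 0") auto
  then have "a ^ j + 1 \<le> a ^ (m div 2) + 1"
    using assms(1) by simp
  moreover have "N \<le> a ^ j + 1"
    using \<open>N dvd a ^ j + 1\<close> by (simp add: dvd_imp_le)
  ultimately show False
    using assms(3) by linarith
qed

definition is_min_poly :: "('b::field \<Rightarrow> 'a::field) \<Rightarrow> 'a \<Rightarrow> 'b poly \<Rightarrow> bool" where
  "is_min_poly f \<alpha> p \<longleftrightarrow> lead_coeff p = 1 \<and> poly (map_poly f p) \<alpha> = 0 \<and>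
     (\<forall>q. q \<noteq> 0 \<and> poly (map_poly f q) \<alpha> = 0 \<longrightarrow> degree p \<le> degree q)"

context field_hom
begin

interpretation map_poly_hom: map_poly_inj_idom_hom hom ..

lemma is_min_poly_dvd:
  assumes "is_min_poly hom \<alpha> M" "poly (map_poly hom p) \<alpha> = 0"
  shows "M dvd p"
proof (rule ccontr)
  assume "\<not> M dvd p"
  then have "p mod M \<noteq> 0"
    by (simp add: mod_eq_0_iff_dvd)
  have "M \<noteq> 0"
    using assms(1) unfolding is_min_poly_def by auto
  have "poly (map_poly hom (p mod M)) \<alpha> = 0"
    using assms unfolding is_min_poly_def minus_div_mult_eq_mod[symmetric]
    by (simp add: map_poly_hom.hom_minus map_poly_hom.hom_mult)
  with \<open>p mod M \<noteq> 0\<close> have "degree M \<le> degree (p mod M)"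
    using assms(1) unfolding is_min_poly_def by blast
  with degree_mod_less[OF \<open>M \<noteq> 0\<close>, of p] \<open>p mod M \<noteq> 0\<close> show False
    by simp
qed

lemma is_min_poly_unique:
  assumes "is_min_poly hom \<alpha> p" "is_min_poly hom \<alpha> q"
  shows "p = q"
  using assms by (intro poly_dvd_antisym) (auto simp: is_min_poly_def intro: is_min_poly_dvd)

lemma is_min_poly_exists:
  assumes "q \<noteq> 0" "poly (map_poly hom q) \<alpha> = 0"
  shows "\<exists>p. is_min_poly hom \<alpha> p"
proof -
  obtain q' where q': "q' \<noteq> 0" "poly (map_poly hom q') \<alpha> = 0"
    and least: "\<And>r. r \<noteq> 0 \<and> poly (map_poly hom r) \<alpha> = 0 \<Longrightarrow> degree q' \<le> degree r"
    using ex_has_least_nat[of "\<lambda>r. r \<noteq> 0 \<and> poly (map_poly hom r) \<alpha> = 0" q degree] assms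
    by blast
  have "is_min_poly hom \<alpha> (smult (inverse (lead_coeff q')) q')"
    using q' least unfolding is_min_poly_def by (simp add: map_poly_hom_smult)
  then show ?thesis ..
qed

lemma is_min_poly_irreducible:
  assumes "is_min_poly hom \<alpha> M"
  shows "irreducible M"
proof (rule irreducibleI)
  have root: "poly (map_poly hom M) \<alpha> = 0" and monic: "lead_coeff M = 1"
    and least: "\<And>q. q \<noteq> 0 \<Longrightarrow> poly (map_poly hom q) \<alpha> = 0 \<Longrightarrow> degree M \<le> degree q"
    using assms unfolding is_min_poly_def by auto
  show "M \<noteq> 0"
    using monic by auto
  have "M \<noteq> 1"
    using root by auto
  with monic have "degree M \<noteq> 0"
    by (metis degree_0_id one_pCons)
  then show "\<not> is_unit M"
    by (simp add: is_unit_iff_degree[OF \<open>M \<noteq> 0\<close>])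
  fix a b
  assume ab: "M = a * b"
  with \<open>M \<noteq> 0\<close> have "a \<noteq> 0" "b \<noteq> 0"
    by auto
  with ab have deg: "degree M = degree a + degree b"
    by (simp add: degree_mult_eq)
  from root ab have "poly (map_poly hom a) \<alpha> = 0 \<or> poly (map_poly hom b) \<alpha> = 0"
    by (simp add: map_poly_hom.hom_mult)
  with least \<open>a \<noteq> 0\<close> \<open>b \<noteq> 0\<close> deg have "degree b = 0 \<or> degree a = 0"
    by fastforce
  with \<open>a \<noteq> 0\<close> \<open>b \<noteq> 0\<close> show "is_unit a \<or> is_unit b"
    by (auto simp: is_unit_iff_degree)
qed

end

lemma frobenius_field_hom:
  assumes "prime CHAR('a::field)"
  shows "field_hom (\<lambda>x::'a. x ^ CHAR('a))"
proof
  fix x y :: 'a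
  show "(x + y) ^ CHAR('a) = x ^ CHAR('a) + y ^ CHAR('a)"
    using assms by (rule freshmans_dream) simp
qed (use assms prime_gt_0_nat in \<open>auto simp: power_mult_distrib\<close>)

definition conjugates_poly :: "nat \<Rightarrow> 'a::field \<Rightarrow> 'a poly" where
  "conjugates_poly m \<beta> = (\<Prod>j<m. [:- (\<beta> ^ CHAR('a) ^ j), 1:])"

lemma poly_conjugates_poly_eq_0_iff:
  "poly (conjugates_poly m (\<beta>::'a::field)) x = 0 \<longleftrightarrow> (\<exists>j<m. x = \<beta> ^ CHAR('a) ^ j)"
  by (auto simp: conjugates_poly_def poly_prod)

lemma conjugates_poly_nonzero: "conjugates_poly m (\<beta>::'a::field) \<noteq> 0"
  by (simp add: conjugates_poly_def)

lemma prod_lessThan_Suc_cyclic: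
  fixes f :: "nat \<Rightarrow> 'b::comm_monoid_mult"
  assumes "f m = f 0"
  shows "(\<Prod>j<m. f (Suc j)) = (\<Prod>j<m. f j)"
proof (cases m)
  case (Suc k)
  have "(\<Prod>j<m. f (Suc j)) = (\<Prod>j<k. f (Suc j)) * f 0"
    using Suc assms by simp
  also have "\<dots> = (\<Prod>j<m. f j)"
    by (simp only: Suc prod.lessThan_Suc_shift mult.commute)
  finally show ?thesis .
qed simp

lemma map_poly_frobenius_conjugates_poly:
  assumes "prime CHAR('a::field)" "(\<beta>::'a) ^ CHAR('a) ^ m = \<beta>"
  shows "map_poly (\<lambda>x. x ^ CHAR('a)) (conjugates_poly m \<beta>) = conjugates_poly m \<beta>"
proof -
  interpret frobenius: field_hom "\<lambda>x::'a. x ^ CHAR('a)"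
    using assms(1) by (rule frobenius_field_hom)
  interpret frobenius_poly: map_poly_comm_ring_hom "\<lambda>x::'a. x ^ CHAR('a)" ..
  define f where "f j = [:- (\<beta> ^ CHAR('a) ^ j), 1:]" for j
  have "map_poly (\<lambda>x. x ^ CHAR('a)) (f j) = f (Suc j)" for j
    by (simp add: f_def frobenius.map_poly_pCons_hom power_mult[symmetric] mult.commute
        frobenius.hom_uminus)
  moreover have "f m = f 0"
    using assms(2) by (simp add: f_def)
  ultimately show ?thesis
    unfolding conjugates_poly_def f_def[symmetric] frobenius_poly.hom_prod
    by (simp add: prod_lessThan_Suc_cyclic)
qed

lemma gf3_emb_field_hom:
  assumes "CHAR('a::field) = 3"
  shows "field_hom (gf3_emb :: gf3 \<Rightarrow> 'a)"
proof
  have char: "CARD(three) = CHAR('a)"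
    using assms card_three by simp
  fix x y :: gf3
  show "gf3_emb (x + y) = (gf3_emb x + gf3_emb y :: 'a)"
    unfolding gf3_emb_def to_int_mod_ring_add char by simp
  show "gf3_emb (x * y) = (gf3_emb x * gf3_emb y :: 'a)"
    unfolding gf3_emb_def to_int_mod_ring_mult char by simp
qed (simp_all add: gf3_emb_def)

lemma cube_fixed_in_range_gf3_emb:
  assumes "CHAR('a::field) = 3" "(c::'a) ^ 3 = c"
  shows "c \<in> range gf3_emb"
proof -
  interpret field_hom "gf3_emb :: gf3 \<Rightarrow> 'a"
    using assms(1) by (rule gf3_emb_field_hom)
  have "c * (c - 1) * (c + 1) = c ^ 3 - c"
    by (simp add: algebra_simps power3_eq_cube)
  with assms(2) have "c = 0 \<or> c = 1 \<or> c = - 1"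
    by (auto simp: eq_neg_iff_add_eq_0)
  then show ?thesis
    by (metis hom_zero hom_one hom_uminus rangeI)
qed

lemma frobenius_fixed_poly_in_range_gf3:
  assumes "CHAR('a::field) = 3" "map_poly (\<lambda>x. x ^ 3) P = (P :: 'a poly)"
  shows "P \<in> range (map_poly gf3_emb)"
proof -
  interpret field_hom "gf3_emb :: gf3 \<Rightarrow> 'a"
    using assms(1) by (rule gf3_emb_field_hom)
  have "coeff P i ^ 3 = coeff P i" for i
    using arg_cong[OF assms(2), of "\<lambda>Q. coeff Q i"] by (simp add: coeff_map_poly)
  then have "coeff P i \<in> range gf3_emb" for i
    by (rule cube_fixed_in_range_gf3_emb[OF assms(1)])
  moreover have "inv_into UNIV (gf3_emb :: gf3 \<Rightarrow> 'a) 0 = 0"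
    using inv_f_f[of 0] by simp
  ultimately have "map_poly gf3_emb (map_poly (inv_into UNIV gf3_emb) P) = P"
    by (intro poly_eqI) (simp add: coeff_map_poly f_inv_into_f)
  then show ?thesis
    by (metis rangeI)
qed

lemma conjugates_poly_in_range_gf3:
  assumes "CHAR('a::field) = 3" "(\<beta>::'a) ^ 3 ^ m = \<beta>"
  shows "conjugates_poly m \<beta> \<in> range (map_poly gf3_emb)"
  using assms map_poly_frobenius_conjugates_poly[of \<beta> m]
  by (intro frobenius_fixed_poly_in_range_gf3) simp_all

lemma is_min_poly_min_poly_gf3:
  assumes "CHAR('a::field) = 3" "q \<noteq> 0" "poly (map_poly gf3_emb q) (\<alpha>::'a) = 0"
  shows "is_min_poly gf3_emb \<alpha> (min_poly_gf3 \<alpha>)"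
proof -
  interpret field_hom "gf3_emb :: gf3 \<Rightarrow> 'a"
    using assms(1) by (rule gf3_emb_field_hom)
  have "min_poly_gf3 \<alpha> = (THE p. is_min_poly gf3_emb \<alpha> p)"
    unfolding min_poly_gf3_def is_min_poly_def ..
  also have "is_min_poly gf3_emb \<alpha> \<dots>"
    using is_min_poly_exists[OF assms(2,3)] is_min_poly_unique by (metis theI)
  finally show ?thesis .
qed

lemma min_poly_gf3_of_periodic:
  assumes "CHAR('a::field) = 3" "m > 0" "(\<beta>::'a) ^ 3 ^ m = \<beta>"
  shows "is_min_poly gf3_emb \<beta> (min_poly_gf3 \<beta>)"
    and "map_poly gf3_emb (min_poly_gf3 \<beta>) dvd conjugates_poly m \<beta>"
proof -
  interpret field_hom "gf3_emb :: gf3 \<Rightarrow> 'a"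
    using assms(1) by (rule gf3_emb_field_hom)
  interpret map_poly_inj_idom_hom "gf3_emb :: gf3 \<Rightarrow> 'a" ..
  obtain Q where Q: "map_poly gf3_emb Q = conjugates_poly m \<beta>"
    using conjugates_poly_in_range_gf3[OF assms(1,3)] by (metis rangeE)
  have "poly (map_poly gf3_emb Q) \<beta> = 0"
    unfolding Q poly_conjugates_poly_eq_0_iff using assms by (auto intro: exI[of _ 0])
  moreover have "Q \<noteq> 0"
    using Q conjugates_poly_nonzero by fastforce
  ultimately show min: "is_min_poly gf3_emb \<beta> (min_poly_gf3 \<beta>)"
    using assms(1) by (intro is_min_poly_min_poly_gf3)
  show "map_poly gf3_emb (min_poly_gf3 \<beta>) dvd conjugates_poly m \<beta>"
    unfolding Q[symmetric] using is_min_poly_dvd[OF min \<open>poly _ \<beta> = 0\<close>] by (rule hom_dvd)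
qed

lemma coprime_min_poly_gf3_if_not_conjugate:
  assumes "CHAR('a::field) = 3" "m > 0" "(\<beta>::'a) ^ 3 ^ m = \<beta>" "\<gamma> ^ 3 ^ m = \<gamma>"
    and "\<forall>j<m. \<gamma> \<noteq> \<beta> ^ 3 ^ j"
  shows "coprime (min_poly_gf3 \<beta>) (min_poly_gf3 \<gamma>)"
proof -
  interpret field_hom "gf3_emb :: gf3 \<Rightarrow> 'a"
    using assms(1) by (rule gf3_emb_field_hom)
  interpret map_poly_inj_idom_hom "gf3_emb :: gf3 \<Rightarrow> 'a" ..
  have "poly (conjugates_poly m \<beta>) \<gamma> \<noteq> 0"
    using assms(1,5) by (simp add: poly_conjugates_poly_eq_0_iff)
  with min_poly_gf3_of_periodic(2)[OF assms(1-3)]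
  have "poly (map_poly gf3_emb (min_poly_gf3 \<beta>)) \<gamma> \<noteq> 0"
    by auto
  moreover have "poly (map_poly gf3_emb (min_poly_gf3 \<gamma>)) \<gamma> = 0"
    and "irreducible (min_poly_gf3 \<gamma>)"
    using min_poly_gf3_of_periodic(1)[OF assms(1,2,4)]
    by (auto simp: is_min_poly_def intro: is_min_poly_irreducible)
  ultimately have "\<not> min_poly_gf3 \<gamma> dvd min_poly_gf3 \<beta>"
    by (auto simp: hom_mult)
  then show ?thesis
    using \<open>irreducible (min_poly_gf3 \<gamma>)\<close>
    by (metis coprime_commute irreducible_imp_prime_elem prime_elem_imp_coprime)
qed

lemma lcm_coprime_monic:
  fixes p q :: "'a::field_gcd poly"
  assumes "coprime p q" "lead_coeff p = 1" "lead_coeff q = 1"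
  shows "lcm p q = p * q"
  using assms by (simp add: lcm_coprime normalize_monic lead_coeff_mult)

lemma primitive_root_unity_dvd:
  assumes "primitive_root_unity N (\<beta>::'a::field)" "N > 0" "\<beta> ^ k = 1"
  shows "N dvd k"
proof (rule ccontr)
  assume "\<not> N dvd k"
  then have "0 < k mod N" "k mod N < N"
    using assms(2) by (auto simp: dvd_eq_mod_eq_0)
  moreover have "\<beta> ^ k = (\<beta> ^ N) ^ (k div N) * \<beta> ^ (k mod N)"
    by (metis div_mult_mod_eq power_add power_mult mult.commute)
  then have "\<beta> ^ (k mod N) = 1"
    using assms unfolding primitive_root_unity_def by simp
  ultimately show False
    using assms(1) unfolding primitive_root_unity_def by blast
qed

lemma lcm_min_poly_gf3_inverse:
  fixes \<beta> :: "'a::field"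
  assumes "CHAR('a) = 3" "primitive_root_unity N \<beta>" "N > 0" "m > 0"
    and "[3 ^ m = 1] (mod N)" "\<forall>j<m. \<not> N dvd 3 ^ j + 1"
  shows "lcm (min_poly_gf3 \<beta>) (min_poly_gf3 (\<beta> ^ (N - 1))) =
    min_poly_gf3 \<beta> * min_poly_gf3 (\<beta> ^ (N - 1))"
proof -
  define \<gamma> where "\<gamma> = \<beta> ^ (N - 1)"
  have "\<beta> ^ N = 1"
    using assms(2) unfolding primitive_root_unity_def by simp
  with assms(3) have \<beta>_inverse: "\<gamma> * \<beta> = 1"
    unfolding \<gamma>_def by (simp flip: power_Suc2)
  have "N dvd 3 ^ m - 1"
    using assms(5) by (simp add: cong_altdef_nat)
  then obtain t where "(3::nat) ^ m = Suc (N * t)"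
    by (metis dvdE Suc_pred' zero_less_numeral zero_less_power)
  with \<open>\<beta> ^ N = 1\<close> have \<beta>_periodic: "\<beta> ^ 3 ^ m = \<beta>"
    by (simp add: power_mult)
  have "\<gamma> ^ 3 ^ m = (\<beta> ^ 3 ^ m) ^ (N - 1)"
    unfolding \<gamma>_def by (simp flip: power_mult add: mult.commute)
  then have \<gamma>_periodic: "\<gamma> ^ 3 ^ m = \<gamma>"
    unfolding \<beta>_periodic \<gamma>_def .
  have "\<gamma> \<noteq> \<beta> ^ 3 ^ j" if "j < m" for j
  proof
    assume "\<gamma> = \<beta> ^ 3 ^ j"
    with \<beta>_inverse have "\<beta> ^ (3 ^ j + 1) = 1"
      by (simp add: mult.commute)
    with assms(2,3) have "N dvd 3 ^ j + 1"
      by (rule primitive_root_unity_dvd)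
    with assms(6) \<open>j < m\<close> show False
      by blast
  qed
  with assms(1,4) \<beta>_periodic \<gamma>_periodic
  have "coprime (min_poly_gf3 \<beta>) (min_poly_gf3 \<gamma>)"
    by (intro coprime_min_poly_gf3_if_not_conjugate) auto
  moreover have "is_min_poly gf3_emb \<beta> (min_poly_gf3 \<beta>)"
    and "is_min_poly gf3_emb \<gamma> (min_poly_gf3 \<gamma>)"
    using assms(1,4) \<beta>_periodic \<gamma>_periodic by (intro min_poly_gf3_of_periodic(1); simp)+
  ultimately show ?thesis
    unfolding \<gamma>_def by (intro lcm_coprime_monic) (auto simp: is_min_poly_def)
qed

theorem lemma30:
  fixes m n :: nat and \<beta> :: "'a::field"
  assumes "CHAR('a) = 3"
    and "m \<ge> 3"
    and "n > 0" and "n dvd (3 ^ m - 1) div 2"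
    and "real n > (3 ^ (m div 2) + 1) / 2"
    and "primitive_root_unity (2 * n) \<beta>"
  shows "ord (2 * n) 3 = m \<and>
    lcm (min_poly_gf3 \<beta>) (min_poly_gf3 (\<beta> ^ (2 * n - 1))) =
      min_poly_gf3 \<beta> * min_poly_gf3 (\<beta> ^ (2 * n - 1))"
proof -
  have "2 * ((3 ^ m - 1) div 2) = (3 ^ m - 1 :: nat)"
    by simp
  with assms(4) have "2 * n dvd 3 ^ m - 1"
    by (metis mult_dvd_mono dvd_refl)
  then have cong: "[3 ^ m = 1] (mod 2 * n)"
    by (simp add: cong_altdef_nat)
  have "real (3 ^ (m div 2) + 1) < real (2 * n)"
    using assms(5) by simp
  then have large: "3 ^ (m div 2) + 1 < 2 * n"
    by linarith
  have ord: "ord (2 * n) 3 = m"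
    using assms(2) cong large by (intro ord_eq_if_power_cong_one) simp_all
  moreover have "\<forall>j<m. \<not> 2 * n dvd 3 ^ j + 1"
    using not_dvd_power_plus_one_if_ord[OF _ ord large] by simp
  moreover have "2 * n > 0" "m > 0"
    using assms(2,3) by simp_all
  ultimately show ?thesis
    using lcm_min_poly_gf3_inverse[OF assms(1,6) _ _ cong] by simp
qed

end
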